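(* Let $K$ be an origin-symmetric convex body in $\mathbb{R}^2$ and let $\mu$ be a B-measure on $\partial K$. Then $\operatorname{supp}(\mu)\subseteq A(K)\setminus E(K)$.
   Context: For an origin-symmetric convex body $K\subset\mathbb{R}^2$ (compact convex set with non-empty interior, $K=-K$), let $\|x\|_K=\min\{\lambda>0: x\in\lambda K\}$ be the associated norm. For non-zero $x,y\in\mathbb{R}^2$, $x$ is Birkhoff orthogonal to $y$, written $x\dashv y$, if $\|x\|_K\le\|x+ty\|_K$ for all $t\in\mathbb{R}$. An angular measure on $\partial K$ is a Borel measure $\mu$ on $\partial K$ with $\mu(\partial K)=2\pi$, $\mu(X)=\mu(-X)$ for every Borel $X\subseteq\partial K$, and $\mu(\{x\})=0$ for every $x\in\partial K$. A B-measure is an angular measure $\mu$ such that $\mu(C)=\pi/2$ for every closed arc $C$ of $\partial K$ that contains no pair of opposite points $z,-z$ and whose endpoints $x,y$ satisfy $x\dashv y$. A point $x\in\partial K$ is an Auerbach point if there is $y\in\partial K$ with $x\dashv y$ and $y\dashv x$; $A(K)$ denotes the set of Auerbach points. $E(K)$ denotes the union of all relatively open non-degenerate line segments contained in $\partial K$. The support $\operatorname{supp}(\mu)$ is the set of all $x\in\partial K$ such that every relatively open subset of $\partial K$ containing $x$ has positive $\mu$-measure. *)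

theory Defs
  imports "HOL-Analysis.Analysis"
begin

type_synonym pt = "real^2"

definition convex_body :: "pt set \<Rightarrow> bool" where
  "convex_body K \<longleftrightarrow> compact K \<and> convex K \<and> interior K \<noteq> {}"

definition origin_symmetric :: "pt set \<Rightarrow> bool" where
  "origin_symmetric K \<longleftrightarrow> uminus ` K = K"

definition knorm :: "pt set \<Rightarrow> pt \<Rightarrow> real" where
  "knorm K x = Inf {l. l > 0 \<and> x \<in> (\<lambda>v. l *\<^sub>R v) ` K}"

definition birkhoff_orth :: "pt set \<Rightarrow> pt \<Rightarrow> pt \<Rightarrow> bool" where
  "birkhoff_orth K x y \<longleftrightarrow> x \<noteq> 0 \<and> y \<noteq> 0 \<and>
     (\<forall>t::real. knorm K x \<le> knorm K (x + t *\<^sub>R y))"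

definition angular_measure :: "pt set \<Rightarrow> pt measure \<Rightarrow> bool" where
  "angular_measure K M \<longleftrightarrow>
     sets M = sets (restrict_space borel (frontier K)) \<and>
     emeasure M (frontier K) = ennreal (2 * pi) \<and>
     (\<forall>X \<in> sets M. emeasure M X = emeasure M (uminus ` X)) \<and>
     (\<forall>x \<in> frontier K. emeasure M {x} = 0)"

text \<open>Closed arcs of the boundary are images of injective paths lying in the boundary.\<close>
definition B_measure :: "pt set \<Rightarrow> pt measure \<Rightarrow> bool" where
  "B_measure K M \<longleftrightarrow> angular_measure K M \<and>
     (\<forall>g. arc g \<and> path_image g \<subseteq> frontier K \<and>
          (\<forall>z \<in> path_image g. - z \<notin> path_image g) \<and>
          birkhoff_orth K (pathstart g) (pathfinish g)
        \<longrightarrow> emeasure M (path_image g) = ennreal (pi / 2))"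

definition auerbach_points :: "pt set \<Rightarrow> pt set" where
  "auerbach_points K = {x \<in> frontier K. \<exists>y \<in> frontier K.
      birkhoff_orth K x y \<and> birkhoff_orth K y x}"

definition E_set :: "pt set \<Rightarrow> pt set" where
  "E_set K = \<Union>{open_segment a b | a b. a \<noteq> b \<and> open_segment a b \<subseteq> frontier K}"

definition measure_support :: "pt set \<Rightarrow> pt measure \<Rightarrow> pt set" where
  "measure_support K M = {x \<in> frontier K. \<forall>U. openin (top_of_set (frontier K)) U \<and> x \<in> U
      \<longrightarrow> emeasure M U > 0}"

end

theory Submission
  imports Defs
begin

text \<open>Parametrise the boundary by angle, \<open>t \<mapsto> bpoint t\<close>. An arc from \<open>bpoint s\<close> to a point
  orthogonal to it, within a half-turn, has measure \<open>pi/2\<close>, and by symmetry every half-turn has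
  measure \<open>pi\<close>. Two such arcs in a row therefore either end exactly at \<open>- bpoint s\<close>, making
  \<open>bpoint s\<close> an Auerbach point, or leave a null arc next to the antipode, hence by symmetry
  a null arc next to \<open>bpoint s\<close>; combining this for \<open>s\<close> and nearby angles (orthogonality
  is a closed condition), a non-Auerbach point has a null neighbourhood.
  A point inside a boundary segment lies between two segment points that are both orthogonal
  to the segment's direction; the two orthogonal arcs from them to a common endpoint have the
  same measure, so the arc between them is null.\<close>

lemma open_segment_line_nbhd:
  fixes u v z :: "'a::real_vector"
  assumes "z \<in> open_segment u v"
  obtains e where "e > 0" "\<And>t. \<bar>t\<bar> < e \<Longrightarrow> z + t *\<^sub>R (v - u) \<in> open_segment u v"
proof -
  obtain m where m: "0 < m" "m < 1" "z = (1 - m) *\<^sub>R u + m *\<^sub>R v" and "u \<noteq> v"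
    using assms unfolding in_segment by blast
  have "z + t *\<^sub>R (v - u) \<in> open_segment u v" if "\<bar>t\<bar> < min m (1 - m)" for t
    unfolding in_segment using \<open>u \<noteq> v\<close> that
    by (intro conjI exI[of _ "m + t"]) (auto simp: m(3) algebra_simps)
  then show ?thesis using m by (intro that[of "min m (1 - m)"]) auto
qed

section \<open>The gauge of a symmetric convex body\<close>

locale symmetric_convex_body =
  fixes K :: "(real^2) set"
  assumes convex_body: "convex_body K" and symmetric: "origin_symmetric K"
begin

lemma compact: "compact K" and convex: "convex K" and interior_nonempty: "interior K \<noteq> {}"
  using convex_body by (auto simp: convex_body_def)

lemma closed: "closed K"
  using compact by (rule compact_imp_closed)

lemma minus_mem: "x \<in> K \<Longrightarrow> - x \<in> K"
  using symmetric unfolding origin_symmetric_def by (metis imageI)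

lemma zero_in_interior: "0 \<in> interior K"
proof -
  obtain z where z: "z \<in> interior K" using interior_nonempty by blast
  have "uminus ` interior K = interior K"
    using symmetric by (metis interior_negations origin_symmetric_def)
  then have "- z \<in> interior K" using z by (metis imageI)
  then have "(1/2) *\<^sub>R z + (1/2) *\<^sub>R (- z) \<in> interior K"
    using z by (intro convexD[OF convex_interior[OF convex]]) auto
  then show ?thesis by simp
qed

lemma zero_mem: "0 \<in> K"
  using zero_in_interior interior_subset by blast

lemma mem_scaled_iff: "l > 0 \<Longrightarrow> x \<in> (\<lambda>v. l *\<^sub>R v) ` K \<longleftrightarrow> (1/l) *\<^sub>R x \<in> K"
  by (auto intro!: image_eqI[of _ _ "(1/l) *\<^sub>R x"])

lemma knorm_conv_Inf: "knorm K x = Inf {l. l > 0 \<and> (1/l) *\<^sub>R x \<in> K}"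
  unfolding knorm_def by (rule arg_cong[where f=Inf]) (auto simp: mem_scaled_iff)

lemma scaled_mem_ex: "\<exists>l>0. (1/l) *\<^sub>R x \<in> K"
proof -
  obtain r where r: "r > 0" "ball 0 r \<subseteq> K" using zero_in_interior mem_interior by blast
  define l where "l = 2 * (norm x + 1) / r"
  have l: "l > 0" using r by (simp add: l_def add_nonneg_pos)
  have "norm ((1/l) *\<^sub>R x) = norm x * r / (2 * (norm x + 1))"
    using r by (simp add: l_def)
  also have "\<dots> < r" using r by (simp add: divide_less_eq add_nonneg_pos)
  finally have "(1/l) *\<^sub>R x \<in> ball 0 r" by simp
  then show ?thesis using l r by blast
qed

lemma knorm_nonneg: "knorm K x \<ge> 0"
  unfolding knorm_conv_Inf using scaled_mem_ex by (intro cInf_greatest) auto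

text \<open>Closedness of \<open>K\<close> is what makes the infimum in the gauge attained.\<close>

lemma knorm_le_iff: assumes "l > 0" shows "knorm K x \<le> l \<longleftrightarrow> (1/l) *\<^sub>R x \<in> K"
proof
  assume "(1/l) *\<^sub>R x \<in> K"
  then show "knorm K x \<le> l" unfolding knorm_conv_Inf using assms
    by (intro cInf_lower) (auto intro: bdd_belowI[of _ 0])
next
  assume le: "knorm K x \<le> l"
  have above: "(1/m) *\<^sub>R x \<in> K" if "m > l" for m
  proof -
    have "Inf {l. l > 0 \<and> (1/l) *\<^sub>R x \<in> K} < m"
      using le that unfolding knorm_conv_Inf by linarith
    then obtain s where s: "s > 0" "(1/s) *\<^sub>R x \<in> K" "s < m"
      using scaled_mem_ex by (subst (asm) cInf_less_iff) (auto intro: bdd_belowI[of _ 0])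
    have "(s/m) *\<^sub>R ((1/s) *\<^sub>R x) + (1 - s/m) *\<^sub>R 0 \<in> K"
      using s zero_mem by (intro convexD[OF convex]) auto
    then show ?thesis using s by simp
  qed
  have lim: "(\<lambda>n. (1 / (l + inverse (real (Suc n)))) *\<^sub>R x) \<longlonglongrightarrow> (1/l) *\<^sub>R x"
    using assms by (intro tendsto_intros LIMSEQ_inverse_real_of_nat_add) auto
  show "(1/l) *\<^sub>R x \<in> K"
    using closed_sequentially[OF closed _ lim] above by simp
qed

lemma mem_iff_knorm_le_1: "x \<in> K \<longleftrightarrow> knorm K x \<le> 1"
  using knorm_le_iff[of 1 x] by simp

lemma knorm_eqI:
  assumes "a \<ge> 0" "\<And>l. l > 0 \<Longrightarrow> (1/l) *\<^sub>R x \<in> K \<longleftrightarrow> a \<le> l"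
  shows "knorm K x = a"
proof -
  have le_iff: "knorm K x \<le> l \<longleftrightarrow> a \<le> l" if "l > 0" for l
    using knorm_le_iff assms(2) that by blast
  show ?thesis
  proof (rule ccontr)
    assume "knorm K x \<noteq> a"
    then show False
      using le_iff[of "(knorm K x + a) / 2"] assms(1) knorm_nonneg[of x]
      by (cases "knorm K x < a") auto
  qed
qed

lemma knorm_zero [simp]: "knorm K 0 = 0"
  by (rule knorm_eqI) (auto simp: zero_mem)

lemma knorm_scaleR: assumes "c \<ge> 0" shows "knorm K (c *\<^sub>R x) = c * knorm K x"
proof (cases "c = 0")
  case False
  with assms have c: "c > 0" by simp
  show ?thesis
  proof (rule knorm_eqI)
    fix l :: real assume "l > 0"
    then have "(1/l) *\<^sub>R (c *\<^sub>R x) \<in> K \<longleftrightarrow> knorm K x \<le> l/c"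
      using c knorm_le_iff[of "l/c" x] by simp
    also have "\<dots> \<longleftrightarrow> c * knorm K x \<le> l" using c by (simp add: le_divide_eq mult.commute)
    finally show "(1/l) *\<^sub>R (c *\<^sub>R x) \<in> K \<longleftrightarrow> c * knorm K x \<le> l" .
  qed (use c knorm_nonneg in auto)
qed simp

lemma knorm_minus [simp]: "knorm K (- x) = knorm K x"
proof -
  have "(1/l) *\<^sub>R (- x) \<in> K \<longleftrightarrow> (1/l) *\<^sub>R x \<in> K" for l
    using minus_mem by (metis minus_minus scaleR_minus_right)
  then show ?thesis unfolding knorm_conv_Inf by simp
qed

lemma knorm_triangle: "knorm K (x + y) \<le> knorm K x + knorm K y"
proof (rule field_le_epsilon)
  fix e :: real assume e: "e > 0"
  define a where "a = knorm K x + e/2"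
  define b where "b = knorm K y + e/2"
  have ab: "a > 0" "b > 0" using knorm_nonneg[of x] knorm_nonneg[of y] e by (auto simp: a_def b_def)
  have "(1/a) *\<^sub>R x \<in> K" "(1/b) *\<^sub>R y \<in> K"
    using knorm_le_iff[OF ab(1), of x] knorm_le_iff[OF ab(2), of y] e by (auto simp: a_def b_def)
  then have "(a/(a+b)) *\<^sub>R ((1/a) *\<^sub>R x) + (b/(a+b)) *\<^sub>R ((1/b) *\<^sub>R y) \<in> K"
    using ab by (intro convexD[OF convex]) (auto simp: add_divide_distrib[symmetric])
  also have "(a/(a+b)) *\<^sub>R ((1/a) *\<^sub>R x) + (b/(a+b)) *\<^sub>R ((1/b) *\<^sub>R y) = (1/(a+b)) *\<^sub>R (x + y)"
    using ab by (simp add: scaleR_add_right)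
  finally have "knorm K (x + y) \<le> a + b" using knorm_le_iff[of "a+b" "x+y"] ab by simp
  then show "knorm K (x + y) \<le> knorm K x + knorm K y + e" by (simp add: a_def b_def)
qed

lemma knorm_pos: assumes "x \<noteq> 0" shows "knorm K x > 0"
proof (rule ccontr)
  assume "\<not> knorm K x > 0"
  then have "knorm K x = 0" using knorm_nonneg[of x] by simp
  then have unbounded: "(1/l) *\<^sub>R x \<in> K" if "l > 0" for l
    using knorm_le_iff[OF that, of x] \<open>knorm K x = 0\<close> that by simp
  obtain R where R: "R > 0" "\<And>y. y \<in> K \<Longrightarrow> norm y \<le> R"
    using compact_imp_bounded[OF compact] bounded_pos by blast
  define l where "l = norm x / (2 * R)"
  have "l > 0" using assms R by (simp add: l_def)
  then have "norm ((1/l) *\<^sub>R x) \<le> R" using R(2) unbounded by blast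
  then show False using assms R by (simp add: l_def)
qed

lemma convex_on_knorm: "convex_on UNIV (knorm K)"
proof (rule convex_onI)
  fix x y :: "real^2" and t :: real assume "0 < t" "t < 1"
  then show "knorm K ((1 - t) *\<^sub>R x + t *\<^sub>R y) \<le> (1 - t) * knorm K x + t * knorm K y"
    using knorm_triangle[of "(1 - t) *\<^sub>R x" "t *\<^sub>R y"] knorm_scaleR[of "1 - t" x] knorm_scaleR[of t y]
    by simp
qed simp

lemma continuous_on_knorm: "continuous_on S (knorm K)"
  using convex_on_continuous[OF open_UNIV convex_on_knorm] continuous_on_subset by blast

lemma continuous_on_knorm_comp [continuous_intros]:
  "continuous_on S f \<Longrightarrow> continuous_on S (\<lambda>x. knorm K (f x))"
  using continuous_on_compose2[OF continuous_on_knorm] by blast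

lemma interior_eq_knorm_less_1: "interior K = {x. knorm K x < 1}"
proof
  have "open {x. knorm K x < 1}"
    by (rule open_Collect_less) (auto intro: continuous_intros)
  moreover have "{x. knorm K x < 1} \<subseteq> K"
    by (auto simp: mem_iff_knorm_le_1)
  ultimately show "{x. knorm K x < 1} \<subseteq> interior K"
    using interior_maximal by blast
next
  show "interior K \<subseteq> {x. knorm K x < 1}"
  proof
    fix x assume "x \<in> interior K"
    then obtain e where e: "e > 0" "ball x e \<subseteq> K" using mem_interior by blast
    define c where "c = 1 + e / (2 * (norm x + 1))"
    have c: "c > 1" using e by (simp add: c_def add_nonneg_pos)
    have "x - c *\<^sub>R x = (1 - c) *\<^sub>R x" by (simp add: algebra_simps)
    then have "dist x (c *\<^sub>R x) = (c - 1) * norm x"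
      using c by (simp add: dist_norm)
    also have "\<dots> = e * (norm x / (2 * (norm x + 1)))" by (simp add: c_def)
    also have "\<dots> < e" using e by (simp add: divide_less_eq add_nonneg_pos)
    finally have "c * knorm K x \<le> 1"
      using e c knorm_scaleR[of c x] mem_iff_knorm_le_1 by auto
    then show "x \<in> {x. knorm K x < 1}"
    proof (cases "knorm K x = 0")
      case False
      then have "knorm K x < c * knorm K x"
        using c knorm_nonneg[of x] mult_strict_right_mono[of 1 c "knorm K x"] by simp
      then show ?thesis using \<open>c * knorm K x \<le> 1\<close> by simp
    qed simp
  qed
qed

lemma frontier_eq_knorm_eq_1: "frontier K = {x. knorm K x = 1}"
  using interior_eq_knorm_less_1 mem_iff_knorm_le_1 closed
  by (auto simp: frontier_def closure_closed)

lemma inner_le_knorm_mult: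
  assumes "\<And>y. y \<in> K \<Longrightarrow> f \<bullet> y \<le> c"
  shows "f \<bullet> x \<le> knorm K x * c"
proof (cases "x = 0")
  case False
  define k where "k = knorm K x"
  have k: "k > 0" using knorm_pos[OF False] by (simp add: k_def)
  then have "(1/k) *\<^sub>R x \<in> K" using knorm_le_iff[of k x] by (simp add: k_def)
  then have "f \<bullet> x / k \<le> c" using assms by fastforce
  then show ?thesis using k by (simp add: k_def divide_le_eq mult.commute)
qed simp

lemma birkhoff_orth_scaleR_right:
  assumes "birkhoff_orth K x y" "c \<noteq> 0" shows "birkhoff_orth K x (c *\<^sub>R y)"
  using assms unfolding birkhoff_orth_def by (auto simp: scaleR_scaleR)

lemma not_birkhoff_orth_self: "\<not> birkhoff_orth K x (c *\<^sub>R x)"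
proof
  assume orth: "birkhoff_orth K x (c *\<^sub>R x)"
  then have "c \<noteq> 0" "x \<noteq> 0" unfolding birkhoff_orth_def by auto
  moreover have "knorm K x \<le> knorm K (x + (- 1 / c) *\<^sub>R (c *\<^sub>R x))"
    using orth unfolding birkhoff_orth_def by blast
  ultimately show False using knorm_pos[of x] by simp
qed

lemma convex_on_knorm_line: "convex_on UNIV (\<lambda>t. knorm K (x + t *\<^sub>R d))"
proof (rule convex_onI)
  fix u s t :: real assume "0 < u" "u < 1"
  moreover have "x + ((1 - u) * s + u * t) *\<^sub>R d = (1 - u) *\<^sub>R (x + s *\<^sub>R d) + u *\<^sub>R (x + t *\<^sub>R d)"
    by (simp add: algebra_simps)
  ultimately show "knorm K (x + ((1 - u) *\<^sub>R s + u *\<^sub>R t) *\<^sub>R d)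
      \<le> (1 - u) * knorm K (x + s *\<^sub>R d) + u * knorm K (x + t *\<^sub>R d)"
    using convex_onD[OF convex_on_knorm, of u "x + s *\<^sub>R d" "x + t *\<^sub>R d"] by simp
qed simp

text \<open>A point of a boundary segment is a local, hence by convexity a global, minimum of the
  gauge along the segment's line.\<close>

lemma birkhoff_orth_segment:
  assumes z: "z \<in> open_segment u v" and sub: "open_segment u v \<subseteq> frontier K"
  shows "birkhoff_orth K z (v - u)"
proof -
  obtain e where "e > 0" and on_seg: "\<And>t. \<bar>t\<bar> < e \<Longrightarrow> z + t *\<^sub>R (v - u) \<in> open_segment u v"
    using open_segment_line_nbhd[OF z] by blast
  have "knorm K (z + 0 *\<^sub>R (v - u)) \<le> knorm K (z + t *\<^sub>R (v - u))" if "t \<in> ball 0 e" for t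
    using subsetD[OF sub on_seg] subsetD[OF sub z] that
    unfolding frontier_eq_knorm_eq_1 by (simp add: dist_real_def)
  then have "knorm K z \<le> knorm K (z + t *\<^sub>R (v - u))" for t
    using convex_local_global_minimum[OF \<open>e > 0\<close> convex_on_knorm_line, of 0 z "v - u"] by simp
  moreover have "z \<noteq> 0" "u \<noteq> v" using z sub frontier_eq_knorm_eq_1 by fastforce+
  ultimately show ?thesis unfolding birkhoff_orth_def by simp
qed

lemma birkhoff_orth_exists:
  assumes x: "x \<in> frontier K" obtains d where "birkhoff_orth K x d"
proof -
  have "x \<in> K" "x \<notin> rel_interior K"
    using x closed rel_interior_nonempty_interior[OF interior_nonempty]
    by (auto simp: frontier_def)
  then obtain a where a: "a \<noteq> 0" "\<And>y. y \<in> K \<Longrightarrow> a \<bullet> x \<le> a \<bullet> y"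
      "\<And>y. y \<in> rel_interior K \<Longrightarrow> a \<bullet> x < a \<bullet> y"
    using supporting_hyperplane_rel_boundary[OF convex] by metis
  have fx: "(- a) \<bullet> x > 0"
    using a(3)[of 0] zero_in_interior rel_interior_nonempty_interior[OF interior_nonempty] by simp
  define d :: "real^2" where "d = (\<chi> i. if i = 1 then a$2 else - a$1)"
  have "a \<bullet> d = 0" by (simp add: d_def inner_vec_def sum_2 mult.commute)
  have "d \<noteq> 0" using a(1) by (auto simp: d_def vec_eq_iff forall_2)
  have "(- a) \<bullet> (x + t *\<^sub>R d) \<le> knorm K (x + t *\<^sub>R d) * ((- a) \<bullet> x)" for t
    using a(2) by (intro inner_le_knorm_mult) (simp add: inner_minus_left)
  then have "1 \<le> knorm K (x + t *\<^sub>R d)" for t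
    using fx \<open>a \<bullet> d = 0\<close> by (simp add: inner_add_right)
  moreover have "knorm K x = 1" "x \<noteq> 0" using x frontier_eq_knorm_eq_1 by auto
  ultimately show ?thesis using that[of d] \<open>d \<noteq> 0\<close> unfolding birkhoff_orth_def by simp
qed

end

section \<open>Polar parametrisation of the boundary\<close>

definition dir :: "real \<Rightarrow> real^2" where
  "dir t = cos t *\<^sub>R axis 1 1 + sin t *\<^sub>R axis 2 1"

definition det2 :: "real^2 \<Rightarrow> real^2 \<Rightarrow> real" where
  "det2 x y = x$1 * y$2 - x$2 * y$1"

lemma dir_nth [simp]: "dir t $ 1 = cos t" "dir t $ 2 = sin t"
  by (auto simp: dir_def axis_def)

lemma norm_vec2: "norm (w::real^2) = sqrt ((w$1)\<^sup>2 + (w$2)\<^sup>2)"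
  by (simp add: norm_vec_def L2_set_def sum_2)

lemma norm_dir [simp]: "norm (dir t) = 1"
  by (simp add: norm_vec2)

lemma dir_neq_0: "dir t \<noteq> 0"
  using norm_dir[of t] by (metis norm_zero zero_neq_one)

lemma continuous_on_dir [continuous_intros]: "continuous_on S dir"
  unfolding dir_def by (intro continuous_intros)

lemma dir_add_pi: "dir (t + pi) = - dir t"
  by (simp add: dir_def)

lemma dir_eq_iff: "dir s = dir t \<longleftrightarrow> (\<exists>n::int. s = t + 2 * pi * n)"
proof -
  have "dir s = dir t \<longleftrightarrow> sin s = sin t \<and> cos s = cos t"
    by (auto simp: vec_eq_iff forall_2)
  then show ?thesis using sin_cos_eq_iff by blast
qed

lemma dir_inj:
  assumes "dir s = dir t" "c \<le> s" "s < c + 2*pi" "c \<le> t" "t < c + 2*pi" shows "s = t"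
proof -
  obtain n :: int where n: "s = t + 2 * pi * n" using assms(1) dir_eq_iff by blast
  have "\<bar>2 * pi * n\<bar> < 2 * pi" using assms n by auto
  then have "n = 0" by (simp add: abs_mult)
  then show ?thesis using n by simp
qed

lemma dir_in_window: obtains t' where "c \<le> t'" "t' < c + 2*pi" "dir t' = dir t"
proof
  define n where "n = \<lfloor>(t - c) / (2*pi)\<rfloor>"
  have "2 * pi * n \<le> t - c" "t - c < 2 * pi * (n + 1)"
    using floor_divide_lower[of "2*pi" "t - c"] floor_divide_upper[of "2*pi" "t - c"]
    by (simp_all add: n_def mult.commute)
  then show "c \<le> t - 2 * pi * n" "t - 2 * pi * n < c + 2 * pi" by (simp_all add: algebra_simps)
  show "dir (t - 2 * pi * n) = dir t"
    unfolding dir_eq_iff by (intro exI[of _ "- n"]) simp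
qed

lemma vec2_polar: obtains t where "w = norm w *\<^sub>R dir t"
proof (cases "w = 0")
  case False
  then have n: "norm w > 0" by simp
  have nn: "(norm w)\<^sup>2 = (w$1)\<^sup>2 + (w$2)\<^sup>2" unfolding norm_vec2 by simp
  have "(w$1 / norm w)\<^sup>2 + (w$2 / norm w)\<^sup>2 = ((w$1)\<^sup>2 + (w$2)\<^sup>2) / (norm w)\<^sup>2"
    by (simp add: power_divide add_divide_distrib)
  also have "\<dots> = 1" using n by (simp add: nn[symmetric])
  finally obtain t where t: "w$1 / norm w = cos t" "w$2 / norm w = sin t"
    by (metis sincos_total_2pi)
  have "w = norm w *\<^sub>R dir t"
    unfolding vec_eq_iff forall_2 using t n by (auto simp: field_simps)
  then show ?thesis by (rule that)
qed (use that in simp)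

lemma det2_add_scaleR_left: "det2 (x + c *\<^sub>R y) z = det2 x z + c * det2 y z"
  by (simp add: det2_def algebra_simps)

lemma det2_add_scaleR_right: "det2 x (y + c *\<^sub>R z) = det2 x y + c * det2 x z"
  by (simp add: det2_def algebra_simps)

lemma det2_scaleR_right: "det2 x (c *\<^sub>R y) = c * det2 x y"
  by (simp add: det2_def algebra_simps)

lemma det2_self [simp]: "det2 x x = 0"
  by (simp add: det2_def)

lemma det2_eq_0_imp_parallel:
  assumes "x \<noteq> 0" "det2 x d = 0" obtains k where "d = k *\<^sub>R x"
proof (cases "x$1 = 0")
  case True
  then have "x$2 \<noteq> 0" using assms(1) by (metis exhaust_2 vec_eq_iff zero_index)
  then show ?thesis using assms True
    by (intro that[of "d$2 / x$2"]) (auto simp: vec_eq_iff forall_2 det2_def)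
next
  case False
  then show ?thesis using assms
    by (intro that[of "d$1 / x$1"]) (auto simp: vec_eq_iff forall_2 det2_def field_simps)
qed

lemma sin_gt_zero_imp_pos:
  fixes y :: real assumes "- pi \<le> y" "y < pi" "sin y > 0" shows "0 < y"
proof (rule ccontr)
  assume "\<not> 0 < y"
  then have "sin (- y) \<ge> 0" using assms by (intro sin_ge_zero) auto
  then show False using assms by simp
qed

lemma sin_lt_zero_imp_neg:
  fixes y :: real assumes "- pi \<le> y" "y < pi" "sin y < 0" shows "- pi < y" "y < 0"
proof -
  show "y < 0"
  proof (rule ccontr)
    assume "\<not> y < 0"
    then have "sin y \<ge> 0" using assms by (intro sin_ge_zero) auto
    then show False using assms by simp
  qed
  show "- pi < y" using assms by (cases "y = - pi") auto
qed

lemma sin_gt_zero_imp_less_pi: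
  fixes y :: real assumes "0 < y" "y < 2*pi" "sin y > 0" shows "y < pi"
proof (rule ccontr)
  assume "\<not> y < pi"
  then have "sin y \<le> 0" using assms by (intro sin_le_zero) auto
  then show False using assms by simp
qed

context symmetric_convex_body
begin

definition bpoint :: "real \<Rightarrow> real^2" where
  "bpoint t = (1 / knorm K (dir t)) *\<^sub>R dir t"

lemma knorm_dir_pos: "knorm K (dir t) > 0"
  using knorm_pos[OF dir_neq_0] .

lemma knorm_bpoint [simp]: "knorm K (bpoint t) = 1"
  using knorm_dir_pos[of t] by (simp add: bpoint_def knorm_scaleR)

lemma bpoint_in_frontier: "bpoint t \<in> frontier K"
  using frontier_eq_knorm_eq_1 by simp

lemma bpoint_neq_0: "bpoint t \<noteq> 0"
  using knorm_bpoint[of t] by (metis knorm_zero zero_neq_one)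

lemma continuous_on_bpoint [continuous_intros]: "continuous_on S bpoint"
  unfolding bpoint_def using knorm_dir_pos
  by (intro continuous_intros) (auto simp: less_imp_neq[symmetric])

lemma continuous_on_bpoint_comp [continuous_intros]:
  "continuous_on S f \<Longrightarrow> continuous_on S (\<lambda>x. bpoint (f x))"
  using continuous_on_compose2[OF continuous_on_bpoint[of UNIV]] by blast

lemma bpoint_add_pi: "bpoint (t + pi) = - bpoint t"
  by (simp add: bpoint_def dir_add_pi)

lemma bpoint_diff_pi: "bpoint (t - pi) = - bpoint t"
  using bpoint_add_pi[of "t - pi"] by simp

lemma bpoint_add_2pi: "bpoint (t + 2 * pi) = bpoint t"
  using dir_eq_iff[of "t + 2 * pi" t] by (force simp: bpoint_def)

lemma bpoint_inj:
  assumes "bpoint s = bpoint t" "c \<le> s" "s < c + 2*pi" "c \<le> t" "t < c + 2*pi" shows "s = t"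
proof -
  have "1 / knorm K (dir s) = 1 / knorm K (dir t)"
    using arg_cong[OF assms(1), of norm] knorm_dir_pos[of s] knorm_dir_pos[of t]
    by (simp add: bpoint_def)
  then have "dir s = dir t" using assms(1) knorm_dir_pos[of s] by (simp add: bpoint_def)
  then show ?thesis using dir_inj assms by blast
qed

lemma bpoint_surj:
  assumes "w \<in> frontier K" obtains t where "c \<le> t" "t < c + 2*pi" "bpoint t = w"
proof -
  obtain th where th: "w = norm w *\<^sub>R dir th" using vec2_polar by blast
  obtain t where t: "c \<le> t" "t < c + 2*pi" "dir t = dir th" using dir_in_window by blast
  have "1 = norm w * knorm K (dir th)"
    using assms th knorm_scaleR[of "norm w" "dir th"] frontier_eq_knorm_eq_1 by force
  then have "1 / knorm K (dir th) = norm w" using knorm_dir_pos[of th] by (simp add: field_simps)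
  then have "bpoint th = w" using th by (simp add: bpoint_def)
  then show ?thesis using t that by (simp add: bpoint_def)
qed

lemma det2_bpoint: "det2 (bpoint s) (bpoint t) = sin (t - s) / (knorm K (dir s) * knorm K (dir t))"
  using knorm_dir_pos[of s] knorm_dir_pos[of t] by (simp add: bpoint_def det2_def sin_diff field_simps)

lemma det2_bpoint_pos_iff: "det2 (bpoint s) (bpoint t) > 0 \<longleftrightarrow> sin (t - s) > 0"
  using mult_pos_pos[OF knorm_dir_pos[of s] knorm_dir_pos[of t]]
  by (auto simp: det2_bpoint zero_less_divide_iff)

lemma det2_bpoint_neg_iff: "det2 (bpoint s) (bpoint t) < 0 \<longleftrightarrow> sin (t - s) < 0"
  using mult_pos_pos[OF knorm_dir_pos[of s] knorm_dir_pos[of t]]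
  by (auto simp: det2_bpoint divide_less_0_iff)

lemma birkhoff_orth_bpoint_iff:
  "birkhoff_orth K (bpoint s) y \<longleftrightarrow> y \<noteq> 0 \<and> (\<forall>t. 1 \<le> knorm K (bpoint s + t *\<^sub>R y))"
  unfolding birkhoff_orth_def using bpoint_neq_0 by simp

lemma birkhoff_orth_bpoint_angle:
  assumes orth: "birkhoff_orth K (bpoint a) d"
  obtains b c where "a < b" "b < a + pi" "c \<noteq> 0" "bpoint b = c *\<^sub>R d"
proof -
  define k where "k = knorm K d"
  have k: "k > 0" using orth knorm_pos by (simp add: k_def birkhoff_orth_def)
  have "knorm K ((1/k) *\<^sub>R d) = 1" using k by (simp add: k_def knorm_scaleR)
  then obtain b where b: "a \<le> b" "b < a + 2*pi" "bpoint b = (1/k) *\<^sub>R d"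
    using bpoint_surj frontier_eq_knorm_eq_1 by (metis mem_Collect_eq)
  have not_parallel: "bpoint a \<noteq> c *\<^sub>R d" for c
    using orth not_birkhoff_orth_self[of "bpoint a" "1/c"]
    by (cases "c = 0") (auto simp: bpoint_neq_0)
  have "b \<noteq> a" using not_parallel b(3) by metis
  moreover have "b \<noteq> a + pi"
    using not_parallel[of "- (1/k)"] b(3) bpoint_add_pi[of a] by (metis minus_minus scaleR_minus_left)
  ultimately consider "a < b" "b < a + pi" | "a + pi < b" "b < a + 2*pi" using b by linarith
  then show ?thesis
  proof cases
    case 1 then show ?thesis using b k that[of b "1/k"] by simp
  next
    case 2
    have "bpoint (b - pi) = (- (1/k)) *\<^sub>R d" using bpoint_diff_pi[of b] b by simp
    then show ?thesis using 2 k that[of "b - pi" "- (1/k)"] by simp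
  qed
qed

lemma birkhoff_orth_bpoint_exists: obtains b where "s < b" "b < s + pi" "birkhoff_orth K (bpoint s) (bpoint b)"
proof -
  obtain d where d: "birkhoff_orth K (bpoint s) d"
    using birkhoff_orth_exists[OF bpoint_in_frontier] by blast
  then obtain b c where "s < b" "b < s + pi" "c \<noteq> 0" "bpoint b = c *\<^sub>R d"
    by (rule birkhoff_orth_bpoint_angle)
  then show ?thesis using birkhoff_orth_scaleR_right[OF d] that by simp
qed

lemma bpoint_angle_between:
  assumes "z \<in> frontier K" "det2 (bpoint a) z > 0" "det2 z (bpoint b) > 0" "a < b" "b < a + pi"
  obtains t where "a < t" "t < b" "bpoint t = z"
proof -
  obtain t where t': "a - pi \<le> t" "t < a - pi + 2*pi" "bpoint t = z"
    by (rule bpoint_surj[OF assms(1)])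
  then have t: "a - pi \<le> t" "t < a + pi" "bpoint t = z" by simp_all
  have "sin (t - a) > 0" using assms(2) t(3) det2_bpoint_pos_iff[of a t] by simp
  then have "a < t" using sin_gt_zero_imp_pos[of "t - a"] t(1,2) by simp
  have "sin (b - t) > 0" using assms(3) t(3) det2_bpoint_pos_iff[of t b] by simp
  then have "t < b" using sin_gt_zero_imp_pos[of "b - t"] \<open>a < t\<close> t(2) assms(4,5) by simp
  show ?thesis using \<open>a < t\<close> \<open>t < b\<close> t(3) by (rule that)
qed

lemma bpoint_angle_opposite:
  assumes "z \<in> frontier K" "det2 (bpoint a) z < 0" "det2 z (bpoint b) > 0" "a < b" "b < a + pi"
  obtains t where "a - pi < t" "t < a" "b < t + pi" "bpoint t = z"
proof -
  obtain t where t': "a - pi \<le> t" "t < a - pi + 2*pi" "bpoint t = z"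
    by (rule bpoint_surj[OF assms(1)])
  then have t: "a - pi \<le> t" "t < a + pi" "bpoint t = z" by simp_all
  have "sin (t - a) < 0" using assms(2) t(3) det2_bpoint_neg_iff[of a t] by simp
  then have "a - pi < t" "t < a" using sin_lt_zero_imp_neg[of "t - a"] t(1,2) by simp_all
  have "sin (b - t) > 0" using assms(3) t(3) det2_bpoint_pos_iff[of t b] by simp
  then have "b < t + pi"
    using sin_gt_zero_imp_less_pi[of "b - t"] \<open>a - pi < t\<close> \<open>t < a\<close> assms(4,5) by simp
  show ?thesis using \<open>a - pi < t\<close> \<open>t < a\<close> \<open>b < t + pi\<close> t(3) by (rule that)
qed

text \<open>The angles \<open>tm\<close>, \<open>tp\<close> are those of two points of the segment on either side of
  \<open>bpoint a\<close>; both points are orthogonal to the segment's direction, hence to \<open>bpoint b\<close>.\<close>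

lemma segment_orth_angles:
  assumes x: "bpoint a \<in> open_segment u v" and sub: "open_segment u v \<subseteq> frontier K"
  obtains tm tp b where "tm < a" "a < tp" "tp < b" "b < tm + pi"
    "birkhoff_orth K (bpoint tm) (bpoint b)" "birkhoff_orth K (bpoint tp) (bpoint b)"
proof -
  define d where "d = v - u"
  have orth: "birkhoff_orth K (bpoint a) d" using birkhoff_orth_segment[OF x sub] by (simp add: d_def)
  then obtain b c where b: "a < b" "b < a + pi" "c \<noteq> 0" "bpoint b = c *\<^sub>R d"
    by (rule birkhoff_orth_bpoint_angle)
  define D where "D = det2 (bpoint a) d"
  have "D \<noteq> 0"
    using det2_eq_0_imp_parallel[OF bpoint_neq_0] orth not_birkhoff_orth_self unfolding D_def by metis
  obtain e where "e > 0" and on_seg: "\<And>t. \<bar>t\<bar> < e \<Longrightarrow> bpoint a + t *\<^sub>R d \<in> open_segment u v"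
    using open_segment_line_nbhd[OF x] unfolding d_def by blast
  define sg where "sg = (if D > 0 then e/2 else - e/2)"
  have sg: "sg * D > 0" "\<bar>sg\<bar> < e" "\<bar>- sg\<bar> < e"
    using \<open>D \<noteq> 0\<close> \<open>e > 0\<close> by (auto simp: sg_def zero_less_mult_iff)
  have side: "z \<in> frontier K" "birkhoff_orth K z (bpoint b)" "det2 z (bpoint b) > 0"
    if "z = bpoint a + t *\<^sub>R d" "\<bar>t\<bar> < e" for z t
  proof -
    show "z \<in> frontier K" using on_seg that sub by auto
    show "birkhoff_orth K z (bpoint b)"
      using birkhoff_orth_segment[OF on_seg sub] birkhoff_orth_scaleR_right b(3,4) that
      unfolding d_def by metis
    have "sin (b - a) > 0" using b(1,2) by (intro sin_gt_zero) auto
    then show "det2 z (bpoint b) > 0"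
      using det2_bpoint_pos_iff[of a b] that b(4)
      by (simp add: det2_add_scaleR_left det2_scaleR_right)
  qed
  have "det2 (bpoint a) (bpoint a + sg *\<^sub>R d) > 0" "det2 (bpoint a) (bpoint a + (- sg) *\<^sub>R d) < 0"
    using sg(1) det2_add_scaleR_right[of "bpoint a" "bpoint a" "- sg" d]
    by (simp_all add: det2_add_scaleR_right D_def)
  then obtain tp tm where tp: "a < tp" "tp < b" "bpoint tp = bpoint a + sg *\<^sub>R d"
    and tm: "a - pi < tm" "tm < a" "b < tm + pi" "bpoint tm = bpoint a + (- sg) *\<^sub>R d"
    using bpoint_angle_between[OF side(1)[OF refl sg(2)] _ side(3)[OF refl sg(2)] b(1,2)]
      bpoint_angle_opposite[OF side(1)[OF refl sg(3)] _ side(3)[OF refl sg(3)] b(1,2)]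
    by metis
  show ?thesis
    using that[of tm tp b] tm tp side(2)[OF tp(3) sg(2)] side(2)[OF tm(4) sg(3)] by simp
qed

definition barc :: "real \<Rightarrow> real \<Rightarrow> (real^2) set" where
  "barc s t = bpoint ` {s..t}"

lemma compact_barc: "compact (barc s t)"
  unfolding barc_def by (intro compact_continuous_image continuous_intros compact_Icc)

lemma closed_barc: "closed (barc s t)"
  using compact_barc compact_imp_closed by blast

lemma barc_subset_frontier: "barc s t \<subseteq> frontier K"
  unfolding barc_def using bpoint_in_frontier by auto

lemma barc_add_pi: "barc (s + pi) (t + pi) = uminus ` barc s t"
proof -
  have shift: "{s + pi..t + pi} = (\<lambda>x. x + pi) ` {s..t}" by simp
  have "barc (s + pi) (t + pi) = (\<lambda>x. bpoint (x + pi)) ` {s..t}"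
    unfolding barc_def shift by (rule image_image)
  then show ?thesis unfolding barc_def bpoint_add_pi by (simp add: image_image)
qed

lemma barc_Un: "s \<le> t \<Longrightarrow> t \<le> u \<Longrightarrow> barc s u = barc s t \<union> barc t u"
  unfolding barc_def by (auto simp flip: image_Un)

lemma barc_Int_subset:
  assumes "s \<le> t" "t \<le> u" "u \<le> s + 2*pi" shows "barc s t \<inter> barc t u \<subseteq> {bpoint s, bpoint t}"
proof
  fix z assume "z \<in> barc s t \<inter> barc t u"
  then obtain a b where ab: "a \<in> {s..t}" "b \<in> {t..u}" "z = bpoint a" "z = bpoint b"
    unfolding barc_def by auto
  show "z \<in> {bpoint s, bpoint t}"
  proof (cases "b = s + 2*pi")
    case True then show ?thesis using ab bpoint_add_2pi[of s] by auto
  next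
    case False
    then have "a = b" using ab assms by (intro bpoint_inj[of a b s]) auto
    then show ?thesis using ab by auto
  qed
qed

lemma frontier_eq_barc: "frontier K = barc s (s + 2*pi)"
proof
  show "frontier K \<subseteq> barc s (s + 2*pi)"
  proof
    fix w assume "w \<in> frontier K"
    then obtain t where "s \<le> t" "t < s + 2*pi" "bpoint t = w" by (rule bpoint_surj)
    then show "w \<in> barc s (s + 2*pi)" unfolding barc_def by auto
  qed
qed (rule barc_subset_frontier)

lemma barc_no_antipodes:
  assumes "s \<le> t" "t < s + pi" "z \<in> barc s t" shows "- z \<notin> barc s t"
proof
  assume "- z \<in> barc s t"
  then obtain a b where ab: "a \<in> {s..t}" "b \<in> {s..t}" "z = bpoint a" "- z = bpoint b"
    using assms(3) unfolding barc_def by auto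
  then have "bpoint a = bpoint (b + pi)" using bpoint_add_pi[of b] by (metis minus_minus)
  then have "a = b + pi" using ab assms by (intro bpoint_inj[of a "b + pi" s]) auto
  then show False using ab assms by auto
qed

lemma barc_is_arc:
  assumes "s < t" "t < s + pi"
  obtains g where "arc g" "path_image g = barc s t" "pathstart g = bpoint s" "pathfinish g = bpoint t"
proof -
  define h where "h u = (t - s) * u + s" for u :: real
  have himg: "h ` {0..1} = {s..t}"
    using assms unfolding h_def by (simp add: image_affinity_atLeastAtMost)
  have "inj_on (bpoint \<circ> h) {0..1}"
  proof
    fix u v :: real assume uv: "u \<in> {0..1}" "v \<in> {0..1}" "(bpoint \<circ> h) u = (bpoint \<circ> h) v"
    moreover have "h u \<in> {s..t}" "h v \<in> {s..t}" using uv himg by auto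
    ultimately have "h u = h v" using assms bpoint_inj[of "h u" "h v" s] by auto
    then show "u = v" using assms unfolding h_def by simp
  qed
  moreover have "continuous_on {0..1} (bpoint \<circ> h)"
    unfolding h_def o_def by (intro continuous_intros)
  moreover have "path_image (bpoint \<circ> h) = barc s t"
    unfolding path_image_def barc_def image_comp[symmetric] himg ..
  ultimately show ?thesis
    by (intro that[of "bpoint \<circ> h"]) (simp_all add: arc_def path_def pathstart_def pathfinish_def h_def)
qed

lemma frontier_Diff_barc:
  assumes "a1 < a2" "a2 < a1 + 2*pi" shows "frontier K - barc a2 (a1 + 2*pi) = bpoint ` {a1<..<a2}"
proof
  show "bpoint ` {a1<..<a2} \<subseteq> frontier K - barc a2 (a1 + 2*pi)"
  proof (clarsimp simp: bpoint_in_frontier)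
    fix u assume u: "a1 < u" "u < a2" "bpoint u \<in> barc a2 (a1 + 2*pi)"
    then obtain v where v: "a2 \<le> v" "v \<le> a1 + 2*pi" "bpoint u = bpoint v" unfolding barc_def by auto
    show False
    proof (cases "v = a1 + 2*pi")
      case True
      then have "u = a1" using u v assms bpoint_add_2pi[of a1] by (intro bpoint_inj[of u a1 a1]) auto
      then show False using u by simp
    next
      case False
      then have "u = v" using u v assms by (intro bpoint_inj[of u v a1]) auto
      then show False using u v by simp
    qed
  qed
  show "frontier K - barc a2 (a1 + 2*pi) \<subseteq> bpoint ` {a1<..<a2}"
  proof
    fix w assume w: "w \<in> frontier K - barc a2 (a1 + 2*pi)"
    then obtain t where t: "a1 \<le> t" "t < a1 + 2*pi" "bpoint t = w"
      using bpoint_surj[of w] by blast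
    have "bpoint a1 \<in> barc a2 (a1 + 2*pi)"
      using assms bpoint_add_2pi[of a1] unfolding barc_def
      by (metis atLeastAtMost_iff image_eqI order.refl less_imp_le)
    then have "t \<noteq> a1" using w t by auto
    moreover have "\<not> a2 \<le> t" using w t unfolding barc_def by auto
    ultimately show "w \<in> bpoint ` {a1<..<a2}" using t by auto
  qed
qed

end

section \<open>Chains of two orthogonal arcs\<close>

context symmetric_convex_body
begin

definition orth_chain :: "real \<Rightarrow> real \<Rightarrow> bool" where
  "orth_chain s c \<longleftrightarrow> (\<exists>b. s < b \<and> b < s + pi \<and> b < c \<and> c < b + pi \<and>
      birkhoff_orth K (bpoint s) (bpoint b) \<and> birkhoff_orth K (bpoint b) (bpoint c))"

lemma orth_chain_exists: obtains c where "orth_chain s c"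
proof -
  obtain b where "s < b" "b < s + pi" "birkhoff_orth K (bpoint s) (bpoint b)"
    by (rule birkhoff_orth_bpoint_exists)
  moreover obtain c where "b < c" "c < b + pi" "birkhoff_orth K (bpoint b) (bpoint c)"
    by (rule birkhoff_orth_bpoint_exists)
  ultimately show ?thesis using that unfolding orth_chain_def by blast
qed

lemma orth_chain_antipode_imp_auerbach:
  assumes "orth_chain a (a + pi)" shows "bpoint a \<in> auerbach_points K"
proof -
  obtain b where b: "birkhoff_orth K (bpoint a) (bpoint b)" "birkhoff_orth K (bpoint b) (bpoint (a + pi))"
    using assms unfolding orth_chain_def by blast
  have "birkhoff_orth K (bpoint b) (bpoint a)"
    using birkhoff_orth_scaleR_right[OF b(2), of "-1"] by (simp add: bpoint_add_pi)
  then show ?thesis unfolding auerbach_points_def using b(1) bpoint_in_frontier by blast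
qed

lemma birkhoff_orth_bpoint_strict:
  assumes "birkhoff_orth K (bpoint s) (bpoint b)" "s \<le> b" "b \<le> s + pi"
  shows "s < b" "b < s + pi"
proof -
  have "b \<noteq> s" using assms(1) not_birkhoff_orth_self[of "bpoint s" 1] by auto
  moreover have "b \<noteq> s + pi"
    using assms(1) not_birkhoff_orth_self[of "bpoint s" "-1"] bpoint_add_pi[of s] by auto
  ultimately show "s < b" "b < s + pi" using assms(2,3) by auto
qed

lemma weak_orth_chain_imp_orth_chain:
  assumes "a \<le> b" "b \<le> a + pi" "b \<le> c" "c \<le> b + pi"
    "\<forall>t. 1 \<le> knorm K (bpoint a + t *\<^sub>R bpoint b)" "\<forall>t. 1 \<le> knorm K (bpoint b + t *\<^sub>R bpoint c)"
  shows "orth_chain a c"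
proof -
  have "birkhoff_orth K (bpoint a) (bpoint b)" "birkhoff_orth K (bpoint b) (bpoint c)"
    using assms(5,6) birkhoff_orth_bpoint_iff bpoint_neq_0 by blast+
  then show ?thesis
    unfolding orth_chain_def
    using birkhoff_orth_bpoint_strict[of a b] birkhoff_orth_bpoint_strict[of b c] assms(1-4) by blast
qed

lemma compact_weak_orth_chains:
  assumes "closed F"
  shows "compact {z :: real \<times> real \<times> real.
    (l \<le> fst z \<and> fst z \<le> u \<and> fst z \<le> fst (snd z) \<and> fst (snd z) \<le> fst z + pi \<and>
      fst (snd z) \<le> snd (snd z) \<and> snd (snd z) \<le> fst (snd z) + pi) \<and>
    ((\<forall>t. 1 \<le> knorm K (bpoint (fst z) + t *\<^sub>R bpoint (fst (snd z)))) \<and>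
      (\<forall>t. 1 \<le> knorm K (bpoint (fst (snd z)) + t *\<^sub>R bpoint (snd (snd z))))) \<and>
    snd (snd z) \<in> F}" (is "compact {z. ?bounds z \<and> ?orth z \<and> ?end z}")
proof -
  have bounds: "closed {z. ?bounds z}"
    by (intro closed_Collect_conj closed_Collect_le continuous_intros)
  have orth: "closed {z. ?orth z}"
    by (intro closed_Collect_conj closed_Collect_all closed_Collect_le continuous_intros)
  have "closed {z. ?end z}"
    using closed_vimage[OF assms, of "\<lambda>z :: real \<times> real \<times> real. snd (snd z)"]
    by (simp add: vimage_def continuous_intros)
  then have "closed {z. ?bounds z \<and> ?orth z \<and> ?end z}"
    by (rule closed_Collect_conj[OF bounds closed_Collect_conj[OF orth]])
  with compact_Times[OF compact_Icc compact_Times[OF compact_Icc compact_Icc]]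
  have "compact (({l..u} \<times> {l..u + pi} \<times> {l..u + 2*pi}) \<inter> {z. ?bounds z \<and> ?orth z \<and> ?end z})"
    by (rule compact_Int_closed)
  moreover have "{z. ?bounds z \<and> ?orth z \<and> ?end z} \<subseteq> {l..u} \<times> {l..u + pi} \<times> {l..u + 2*pi}"
    by (auto simp: mem_Times_iff)
  ultimately show ?thesis by (simp add: Int_absorb1)
qed

text \<open>Orthogonality is a closed condition, and the middle angles of chains starting in a
  bounded window range over a compact set, so they converge along with the start angles.\<close>

lemma closed_orth_chain_starts:
  assumes "closed F" shows "closed {s. \<exists>c\<in>F. orth_chain s c}"
proof -
  have "a \<in> {s. \<exists>c\<in>F. orth_chain s c}" if a: "a \<in> closure {s. \<exists>c\<in>F. orth_chain s c}" for a
  proof -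
    let ?P = "\<lambda>z :: real \<times> real \<times> real.
      (a - 1 \<le> fst z \<and> fst z \<le> a + 1 \<and> fst z \<le> fst (snd z) \<and> fst (snd z) \<le> fst z + pi \<and>
        fst (snd z) \<le> snd (snd z) \<and> snd (snd z) \<le> fst (snd z) + pi) \<and>
      ((\<forall>t. 1 \<le> knorm K (bpoint (fst z) + t *\<^sub>R bpoint (fst (snd z)))) \<and>
        (\<forall>t. 1 \<le> knorm K (bpoint (fst (snd z)) + t *\<^sub>R bpoint (snd (snd z))))) \<and>
      snd (snd z) \<in> F"
    have "closed (fst ` {z. ?P z})"
      using compact_weak_orth_chains[OF assms, of "a - 1" "a + 1"]
      by (intro compact_imp_closed compact_continuous_image continuous_on_fst continuous_on_id)
    moreover have "a \<in> closure (fst ` {z. ?P z})"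
      unfolding closure_approachable
    proof (intro allI impI)
      fix e :: real assume "e > 0"
      have "min e 1 > 0" using \<open>e > 0\<close> by simp
      then obtain s c where s: "dist s a < min e 1" "c \<in> F" "orth_chain s c"
        using a unfolding closure_approachable by blast
      then obtain b where b: "s < b" "b < s + pi" "b < c" "c < b + pi"
        "birkhoff_orth K (bpoint s) (bpoint b)" "birkhoff_orth K (bpoint b) (bpoint c)"
        unfolding orth_chain_def by blast
      have "\<bar>s - a\<bar> < 1" using s(1) by (simp add: dist_real_def)
      then have "?P (s, b, c)"
        using b s(2) unfolding birkhoff_orth_bpoint_iff by (simp add: abs_less_iff)
      then show "\<exists>y\<in>fst ` {z. ?P z}. dist y a < e" using s(1) by force
    qed
    ultimately have "a \<in> fst ` {z. ?P z}" by (simp add: closure_closed)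
    then obtain z where "?P z" "fst z = a" by blast
    then obtain b c where z: "z = (a, b, c)" by (cases z) auto
    then have "orth_chain a c" "c \<in> F"
      using \<open>?P z\<close> weak_orth_chain_imp_orth_chain[of a b c] unfolding z by simp_all
    then show ?thesis by blast
  qed
  then show ?thesis using closure_subset_eq by blast
qed

lemma orth_chain_overshoot_nearby:
  assumes "\<And>c. orth_chain a c \<Longrightarrow> a + pi < c"
  obtains s c where "a - 1 < s" "s < a" "orth_chain s c" "a + pi < c"
proof (rule ccontr)
  assume none: "\<not> thesis"
  note witness = that
  have "s \<in> {s. \<exists>c\<in>{..a + pi}. orth_chain s c}" if "s \<in> {a - 1<..<a}" for s
  proof -
    obtain c where "orth_chain s c" by (rule orth_chain_exists)
    moreover from this have "c \<le> a + pi" using none witness[of s c] that by force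
    ultimately show ?thesis by auto
  qed
  then have "closure {a - 1<..<a} \<subseteq> {s. \<exists>c\<in>{..a + pi}. orth_chain s c}"
    by (intro closure_minimal closed_orth_chain_starts closed_atMost) auto
  moreover have "a \<in> closure {a - 1<..<a}" by simp
  ultimately have "a \<in> {s. \<exists>c\<in>{..a + pi}. orth_chain s c}" by blast
  then show False using assms by fastforce
qed

lemma orth_chain_undershoot_nearby:
  assumes "\<And>c. orth_chain a c \<Longrightarrow> c < a + pi"
  obtains s c where "a < s" "s < a + 1" "orth_chain s c" "c < a + pi"
proof (rule ccontr)
  assume none: "\<not> thesis"
  note witness = that
  have "s \<in> {s. \<exists>c\<in>{a + pi..}. orth_chain s c}" if "s \<in> {a<..<a + 1}" for s
  proof -
    obtain c where "orth_chain s c" by (rule orth_chain_exists)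
    moreover from this have "a + pi \<le> c" using none witness[of s c] that by force
    ultimately show ?thesis by auto
  qed
  then have "closure {a<..<a + 1} \<subseteq> {s. \<exists>c\<in>{a + pi..}. orth_chain s c}"
    by (intro closure_minimal closed_orth_chain_starts closed_atLeast) auto
  moreover have "a \<in> closure {a<..<a + 1}" by simp
  ultimately have "a \<in> {s. \<exists>c\<in>{a + pi..}. orth_chain s c}" by blast
  then show False using assms by fastforce
qed

end

section \<open>B-measures\<close>

locale B_measure_body = symmetric_convex_body +
  fixes M :: "(real^2) measure"
  assumes B_measure: "B_measure K M"
begin

lemma angular_measure: "angular_measure K M"
  using B_measure unfolding B_measure_def by auto

lemma sets_M: "sets M = sets (restrict_space borel (frontier K))"
  using angular_measure unfolding angular_measure_def by auto

lemma space_M: "space M = frontier K"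
  using sets_eq_imp_space_eq[OF sets_M] by (simp add: space_restrict_space)

lemma closed_sets: assumes "closed C" "C \<subseteq> frontier K" shows "C \<in> sets M"
proof -
  have "C = frontier K \<inter> C" using assms by auto
  then show ?thesis unfolding sets_M sets_restrict_space using borel_closed[OF assms(1)] by blast
qed

lemma emeasure_frontier: "emeasure M (frontier K) = ennreal (2 * pi)"
  using angular_measure unfolding angular_measure_def by auto

sublocale finite_measure M
  by (rule finite_measureI) (simp add: space_M emeasure_frontier)

lemma barc_sets: "barc s t \<in> sets M"
  using closed_sets[OF closed_barc barc_subset_frontier] .

lemma singleton_sets: "x \<in> frontier K \<Longrightarrow> {x} \<in> sets M"
  using closed_sets[of "{x}"] by auto

lemma measure_singleton: "x \<in> frontier K \<Longrightarrow> measure M {x} = 0"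
  using angular_measure unfolding angular_measure_def measure_def by auto

lemma measure_uminus_image: "X \<in> sets M \<Longrightarrow> measure M (uminus ` X) = measure M X"
  using angular_measure unfolding angular_measure_def measure_def by auto

lemma measure_subset_doubleton:
  assumes "X \<subseteq> {x, y}" "x \<in> frontier K" "y \<in> frontier K" shows "measure M X = 0"
proof -
  have "measure M X \<le> measure M ({x} \<union> {y})"
    using assms singleton_sets by (intro finite_measure_mono sets.Un) auto
  also have "\<dots> \<le> measure M {x} + measure M {y}"
    by (intro measure_subadditive) (auto intro: singleton_sets simp: assms emeasure_eq_measure)
  also have "\<dots> = 0" using assms measure_singleton by simp
  finally show ?thesis using measure_nonneg[of M X] by simp
qed

lemma measure_barc_split:
  assumes "s \<le> t" "t \<le> u" "u \<le> s + 2*pi"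
  shows "measure M (barc s u) = measure M (barc s t) + measure M (barc t u)"
proof -
  have "measure M (barc s t \<inter> barc t u) = 0"
    using measure_subset_doubleton[OF barc_Int_subset[OF assms]] bpoint_in_frontier by blast
  then show ?thesis
    unfolding barc_Un[OF assms(1,2)] by (subst measure_Un3) (simp_all add: fmeasurable_eq_sets barc_sets)
qed

lemma measure_barc_add_pi: "measure M (barc (s + pi) (t + pi)) = measure M (barc s t)"
  unfolding barc_add_pi by (rule measure_uminus_image[OF barc_sets])

lemma measure_barc_half_turn: "measure M (barc s (s + pi)) = pi"
proof -
  have "2 * pi = measure M (barc s (s + 2*pi))"
    using emeasure_frontier frontier_eq_barc[of s] by (simp add: measure_def)
  also have "\<dots> = measure M (barc s (s + pi)) + measure M (barc (s + pi) (s + pi + pi))"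
    by (subst measure_barc_split[of s "s + pi"]) (simp_all add: algebra_simps)
  also have "\<dots> = 2 * measure M (barc s (s + pi))"
    using measure_barc_add_pi[of s "s + pi"] by simp
  finally show ?thesis by simp
qed

lemma measure_barc_orth:
  assumes "s < t" "t < s + pi" "birkhoff_orth K (bpoint s) (bpoint t)"
  shows "measure M (barc s t) = pi / 2"
proof -
  obtain g where g: "arc g" "path_image g = barc s t" "pathstart g = bpoint s" "pathfinish g = bpoint t"
    using barc_is_arc[OF assms(1,2)] by blast
  then have "emeasure M (path_image g) = ennreal (pi / 2)"
    using B_measure assms barc_subset_frontier barc_no_antipodes[of s t]
    unfolding B_measure_def by (metis less_imp_le)
  then show ?thesis using g(2) by (simp add: measure_def)
qed

lemma null_barc_imp_not_in_support:
  assumes "a1 < a" "a < a2" "a2 < a1 + 2*pi" "measure M (barc a1 a2) = 0"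
  shows "bpoint a \<notin> measure_support K M"
proof
  assume supp: "bpoint a \<in> measure_support K M"
  define U where "U = bpoint ` {a1<..<a2}"
  have "U = frontier K \<inter> - barc a2 (a1 + 2*pi)"
    using frontier_Diff_barc[of a1 a2] assms by (auto simp: U_def)
  then have "openin (top_of_set (frontier K)) U"
    using closed_barc by (simp add: openin_open_Int open_Compl)
  moreover have "bpoint a \<in> U" unfolding U_def using assms by auto
  ultimately have "emeasure M U > 0" using supp unfolding measure_support_def by auto
  moreover have "emeasure M U \<le> emeasure M (barc a1 a2)"
    unfolding U_def barc_def by (intro emeasure_mono) (auto simp: barc_sets[unfolded barc_def])
  ultimately show False using assms(4) by (simp add: emeasure_eq_measure)
qed


lemma measure_support_Int_E_set: "measure_support K M \<inter> E_set K = {}"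
proof (intro equals0I)
  fix x assume x: "x \<in> measure_support K M \<inter> E_set K"
  then obtain u v where seg: "x \<in> open_segment u v" "open_segment u v \<subseteq> frontier K"
    unfolding E_set_def by blast
  obtain a where a: "bpoint a = x" using bpoint_surj[of x 0] seg by blast
  obtain tm tp b where angles: "tm < a" "a < tp" "tp < b" "b < tm + pi"
    and orth: "birkhoff_orth K (bpoint tm) (bpoint b)" "birkhoff_orth K (bpoint tp) (bpoint b)"
    using segment_orth_angles seg a by blast
  have "measure M (barc tm b) = measure M (barc tm tp) + measure M (barc tp b)"
    using angles by (intro measure_barc_split) auto
  then have "measure M (barc tm tp) = 0"
    using angles measure_barc_orth[OF _ _ orth(1)] measure_barc_orth[OF _ _ orth(2)] by simp
  then have "bpoint a \<notin> measure_support K M"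
    using angles by (intro null_barc_imp_not_in_support) auto
  then show False using x a by simp
qed

lemma measure_barc_orth_chain:
  assumes "orth_chain s c" shows "measure M (barc s c) = pi"
proof -
  obtain b where b: "s < b" "b < s + pi" "b < c" "c < b + pi"
    "birkhoff_orth K (bpoint s) (bpoint b)" "birkhoff_orth K (bpoint b) (bpoint c)"
    using assms unfolding orth_chain_def by blast
  then have "measure M (barc s c) = measure M (barc s b) + measure M (barc b c)"
    by (intro measure_barc_split) auto
  then show ?thesis using b measure_barc_orth by simp
qed

lemma orth_chain_beyond_antipode:
  assumes "orth_chain s c" "s + pi < c" shows "measure M (barc s (c - pi)) = 0"
proof -
  have "c < s + 2*pi" using assms(1) unfolding orth_chain_def by auto
  then have "measure M (barc s c) = measure M (barc s (s + pi)) + measure M (barc (s + pi) c)"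
    using assms(2) by (intro measure_barc_split) auto
  then show ?thesis
    using measure_barc_orth_chain[OF assms(1)] measure_barc_half_turn measure_barc_add_pi[of s "c - pi"]
    by simp
qed

lemma orth_chain_before_antipode:
  assumes "orth_chain s c" "c < s + pi" shows "measure M (barc (c - pi) s) = 0"
proof -
  have "s < c" using assms(1) unfolding orth_chain_def by auto
  then have "measure M (barc s (s + pi)) = measure M (barc s c) + measure M (barc c (s + pi))"
    using assms(2) by (intro measure_barc_split) auto
  then show ?thesis
    using measure_barc_orth_chain[OF assms(1)] measure_barc_half_turn measure_barc_add_pi[of "c - pi" s]
    by simp
qed

text \<open>Chains from \<open>a\<close> ending on both sides of \<open>a + pi\<close> give null arcs on both sides of \<open>a\<close>;
  if they all end on one side, a chain from a nearby angle on the other side of \<open>a\<close>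
  still does, and its null arc reaches across \<open>a\<close>.\<close>

lemma null_barc_around_non_auerbach:
  assumes "bpoint a \<notin> auerbach_points K"
  obtains a1 a2 where "a1 < a" "a < a2" "a2 < a1 + 2*pi" "measure M (barc a1 a2) = 0"
proof -
  have "c \<noteq> a + pi" if "orth_chain a c" for c
    using orth_chain_antipode_imp_auerbach assms that by blast
  then consider c1 c2 where "orth_chain a c1" "a + pi < c1" "orth_chain a c2" "c2 < a + pi"
    | "\<And>c. orth_chain a c \<Longrightarrow> a + pi < c" | "\<And>c. orth_chain a c \<Longrightarrow> c < a + pi"
    by (meson linorder_neqE_linordered_idom)
  then show ?thesis
  proof cases
    case (1 c1 c2)
    have "c1 < a + 2*pi" "a < c2" using 1 unfolding orth_chain_def by auto
    then have "measure M (barc (c2 - pi) (c1 - pi)) = measure M (barc (c2 - pi) a) + measure M (barc a (c1 - pi))"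
      using 1 by (intro measure_barc_split) auto
    then show ?thesis
      using that[of "c2 - pi" "c1 - pi"] 1 \<open>a < c2\<close> \<open>c1 < a + 2*pi\<close>
        orth_chain_beyond_antipode[OF 1(1,2)] orth_chain_before_antipode[OF 1(3,4)] by simp
  next
    case 2
    then obtain s c where sc: "a - 1 < s" "s < a" "orth_chain s c" "a + pi < c"
      by (rule orth_chain_overshoot_nearby)
    then have "measure M (barc s (c - pi)) = 0" by (intro orth_chain_beyond_antipode) auto
    moreover have "c < s + 2*pi" using sc(3) unfolding orth_chain_def by auto
    ultimately show ?thesis using that[of s "c - pi"] sc by simp
  next
    case 3
    then obtain s c where sc: "a < s" "s < a + 1" "orth_chain s c" "c < a + pi"
      by (rule orth_chain_undershoot_nearby)
    then have "measure M (barc (c - pi) s) = 0" by (intro orth_chain_before_antipode) auto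
    moreover have "s < c" using sc(3) unfolding orth_chain_def by auto
    ultimately show ?thesis using that[of "c - pi" s] sc by simp
  qed
qed

lemma measure_support_subset_auerbach_points: "measure_support K M \<subseteq> auerbach_points K"
proof
  fix x assume supp: "x \<in> measure_support K M"
  then obtain a where a: "bpoint a = x"
    using bpoint_surj[of x 0] unfolding measure_support_def by blast
  show "x \<in> auerbach_points K"
  proof (rule ccontr)
    assume "x \<notin> auerbach_points K"
    then obtain a1 a2 where "a1 < a" "a < a2" "a2 < a1 + 2*pi" "measure M (barc a1 a2) = 0"
      using null_barc_around_non_auerbach a by blast
    then show False using null_barc_imp_not_in_support supp a by blast
  qed
qed

end

theorem lemma2p1:
  fixes K :: "(real^2) set" and M :: "(real^2) measure"
  assumes "convex_body K" and "origin_symmetric K" and "B_measure K M"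
  shows "measure_support K M \<subseteq> auerbach_points K - E_set K"
proof -
  interpret B_measure_body K M
    using assms by unfold_locales
  show ?thesis
    using measure_support_subset_auerbach_points measure_support_Int_E_set by blast
qed

end
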